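(* Suppose Assumptions 1–5 hold and the set $\Theta^*$ of equilibrium models is finite. Write $\Theta^*\cup\{0,1\}=\{\theta_0,\theta_1,\dots,\theta_N\}$ with $0=\theta_0<\theta_1<\dots<\theta_N=1$. Then for each $n\in\{0,\dots,N-1\}$, exactly one of the following holds: (i) for every $\theta\in(\theta_n,\theta_{n+1})$ and every $x\in F(\delta_\theta)$, $\theta(\delta_x)>\theta$; (ii) for every $\theta\in(\theta_n,\theta_{n+1})$ and every $x\in F(\delta_\theta)$, $\theta(\delta_x)<\theta$.
   Context: Setting. $X$ is a finite set of actions, $Y$ a set of consequences, $Q:X\to\Delta Y$ the true consequence function, and $\{Q_\theta:\theta\in\Theta\}$ the agent's models with $\Theta=[0,1]$. Assumptions 1–2: $Y$ is a compact subset of a Euclidean space; there is a Borel probability measure $\nu$ on $Y$ with $Q(\cdot\mid x),Q_\theta(\cdot\mid x)\ll\nu$, densities $q(\cdot\mid x)$, $q_\theta(\cdot\mid x)$; $\theta\mapsto q_\theta(\cdot\mid x)$ is continuous $Q(\cdot\mid x)$-a.s.; for each $x$ there is $g_x\in L^2(Y,Q(\cdot\mid x))$ with $|\ln(q(y\mid x)/q_\theta(y\mid x))|\le g_x(y)$ for all $\theta$, $Q(\cdot\mid x)$-a.s. Assumption 3: the prior has full support on $\Theta$. Assumption 4: the policy correspondence $F:\Delta\Theta\rightrightarrows X$ (nonempty-valued, $\Delta\Theta$ = Borel probability measures on $\Theta$) is upper hemicontinuous. $\delta_\theta$ is the point mass at $\theta\in\Theta$, $\delta_x\in\Delta X$ the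 point mass at action $x$; for $S\subseteq X$, $\Delta S$ is the set of distributions on $X$ supported in $S$; $F(A)=\bigcup_{\mu\in A}F(\mu)$ for $A\subseteq\Delta\Theta$. KLD: $K(\theta,\sigma)=\sum_x\sigma(x)\int\ln\frac{q(y\mid x)}{q_\theta(y\mid x)}q(y\mid x)\nu(dy)$ for $\sigma\in\Delta X$. Assumption 5 (identifiability): (i) for each $\sigma\in\Delta X$, $K(\cdot,\sigma)$ has a unique minimizer $\theta(\sigma)\in[0,1]$; (ii) for each $\sigma$ with $\theta(\sigma)\in(0,1)$, $K(\cdot,\sigma)$ is twice differentiable at $\theta(\sigma)$ with positive second derivative there. Equilibrium: $\sigma\in\Delta X$ with $\sigma\in\Delta F(\{\delta_{\theta(\sigma)}\})$, i.e. $\sigma$ is supported in $F(\delta_{\theta(\sigma)})$. A model $\theta^*\in[0,1]$ is an equilibrium model if $\theta^*=\theta(\sigma^* )$ for some equilibrium $\sigma^*$; $\Theta^*$ is the set of equilibrium models. *)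

theory Defs
  imports "HOL-Probability.Probability"
begin

definition Delta_X :: "('x::finite \<Rightarrow> real) set" where
  "Delta_X = {\<sigma>. (\<forall>x. 0 \<le> \<sigma> x) \<and> (\<Sum>x\<in>UNIV. \<sigma> x) = 1}"

definition dirac_X :: "'x::finite \<Rightarrow> ('x \<Rightarrow> real)" where
  "dirac_X x = (\<lambda>x'. if x' = x then 1 else 0)"

definition supp_X :: "('x::finite \<Rightarrow> real) \<Rightarrow> 'x set" where
  "supp_X \<sigma> = {x. \<sigma> x \<noteq> 0}"

definition Theta_space :: "real measure" where
  "Theta_space = restrict_space borel {0..1}"

definition Delta_Theta :: "real measure set" where
  "Delta_Theta = {\<mu>. prob_space \<mu> \<and> sets \<mu> = sets Theta_space}"

definition dirac_Theta :: "real \<Rightarrow> real measure" where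
  "dirac_Theta \<theta> = return Theta_space \<theta>"

definition weak_conv_Theta :: "(nat \<Rightarrow> real measure) \<Rightarrow> real measure \<Rightarrow> bool" where
  "weak_conv_Theta \<mu>s \<mu> = (\<forall>f::real \<Rightarrow> real. continuous_on {0..1} f \<longrightarrow>
      (\<lambda>n. \<integral>\<theta>. f \<theta> \<partial>(\<mu>s n)) \<longlonglongrightarrow> (\<integral>\<theta>. f \<theta> \<partial>\<mu>))"

text \<open>Upper hemicontinuity of a correspondence from Delta Theta (weak topology, metrizable since
  [0,1] is compact metric) into the finite discrete set of actions: for every open V containing
  F mu (equivalently V = F mu, since every subset of X is open) there is a neighbourhood of mu
  mapped into V; stated sequentially.\<close>
definition uhc_policy :: "(real measure \<Rightarrow> 'x set) \<Rightarrow> bool" where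
  "uhc_policy F = (\<forall>\<mu>\<in>Delta_Theta. \<forall>\<mu>s. (\<forall>n. \<mu>s n \<in> Delta_Theta) \<and> weak_conv_Theta \<mu>s \<mu> \<longrightarrow>
      eventually (\<lambda>n. F (\<mu>s n) \<subseteq> F \<mu>) sequentially)"

definition Qdist :: "'y measure \<Rightarrow> ('x \<Rightarrow> 'y \<Rightarrow> real) \<Rightarrow> 'x \<Rightarrow> 'y measure" where
  "Qdist \<nu> q x = density \<nu> (\<lambda>y. ennreal (q x y))"

definition is_density :: "'y measure \<Rightarrow> ('y \<Rightarrow> real) \<Rightarrow> bool" where
  "is_density \<nu> f = (f \<in> borel_measurable \<nu> \<and> (\<forall>y\<in>space \<nu>. 0 \<le> f y) \<and>
      (\<integral>\<^sup>+y. ennreal (f y) \<partial>\<nu>) = 1)"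

definition KLD :: "'y measure \<Rightarrow> ('x::finite \<Rightarrow> 'y \<Rightarrow> real) \<Rightarrow> (real \<Rightarrow> 'x \<Rightarrow> 'y \<Rightarrow> real)
    \<Rightarrow> real \<Rightarrow> ('x \<Rightarrow> real) \<Rightarrow> real" where
  "KLD \<nu> q q\<theta> \<theta> \<sigma> = (\<Sum>x\<in>UNIV. \<sigma> x * (\<integral>y. ln (q x y / q\<theta> \<theta> x y) * q x y \<partial>\<nu>))"

text \<open>theta(sigma): the (assumed unique) minimizer of K(.,sigma) over [0,1].\<close>
definition KL_min :: "'y measure \<Rightarrow> ('x::finite \<Rightarrow> 'y \<Rightarrow> real) \<Rightarrow> (real \<Rightarrow> 'x \<Rightarrow> 'y \<Rightarrow> real)
    \<Rightarrow> ('x \<Rightarrow> real) \<Rightarrow> real" where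
  "KL_min \<nu> q q\<theta> \<sigma> = (THE \<theta>. \<theta> \<in> {0..1} \<and>
      (\<forall>t\<in>{0..1}. KLD \<nu> q q\<theta> \<theta> \<sigma> \<le> KLD \<nu> q q\<theta> t \<sigma>))"

definition is_equilibrium :: "'y measure \<Rightarrow> ('x::finite \<Rightarrow> 'y \<Rightarrow> real) \<Rightarrow> (real \<Rightarrow> 'x \<Rightarrow> 'y \<Rightarrow> real)
    \<Rightarrow> (real measure \<Rightarrow> 'x set) \<Rightarrow> ('x \<Rightarrow> real) \<Rightarrow> bool" where
  "is_equilibrium \<nu> q q\<theta> F \<sigma> = (\<sigma> \<in> Delta_X \<and>
      supp_X \<sigma> \<subseteq> F (dirac_Theta (KL_min \<nu> q q\<theta> \<sigma>)))"

definition equilibrium_models :: "'y measure \<Rightarrow> ('x::finite \<Rightarrow> 'y \<Rightarrow> real) \<Rightarrow> (real \<Rightarrow> 'x \<Rightarrow> 'y \<Rightarrow> real)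
    \<Rightarrow> (real measure \<Rightarrow> 'x set) \<Rightarrow> real set" where
  "equilibrium_models \<nu> q q\<theta> F = {KL_min \<nu> q q\<theta> \<sigma> | \<sigma>. is_equilibrium \<nu> q q\<theta> F \<sigma>}"

end

theory Submission
  imports Defs
begin

text \<open>
  Between two consecutive equilibrium models, a model \<open>\<theta>\<close> is not itself an equilibrium model,
  so no best response \<open>x \<in> F(\<delta>\<^sub>\<theta>)\<close> has \<open>\<theta>(\<delta>\<^sub>x) = \<theta>\<close> (else \<open>\<delta>\<^sub>x\<close> would be an equilibrium), and
  no two best responses lie on opposite sides of \<open>\<theta>\<close>: along the mixtures of their Dirac
  measures the KL-minimiser moves continuously (its objective is affine in the mixing weight
  and continuous in the model), so by the intermediate value theorem some mixture supported
  in \<open>F(\<delta>\<^sub>\<theta>)\<close> would have \<open>\<theta>\<close> as its model. Hence each \<open>\<theta>\<close> in the gap has a well-defined side.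
  Upper hemicontinuity of \<open>F\<close> makes the set of models of either side open, and the gap is
  connected, so the side is the same throughout.
\<close>

lemma continuous_on_integral_dominated:
  fixes f :: "'a::{first_countable_topology, t2_space} \<Rightarrow> 'b \<Rightarrow> real"
  assumes meas: "\<And>\<theta>. \<theta> \<in> T \<Longrightarrow> f \<theta> \<in> borel_measurable M"
    and w: "integrable M w"
    and bound: "\<And>\<theta>. \<theta> \<in> T \<Longrightarrow> AE y in M. norm (f \<theta> y) \<le> w y"
    and lim: "\<And>u a. (\<forall>n. u n \<in> T) \<Longrightarrow> a \<in> T \<Longrightarrow> u \<longlonglongrightarrow> a \<Longrightarrow>
                AE y in M. (\<lambda>n. f (u n) y) \<longlonglongrightarrow> f a y"
  shows "continuous_on T (\<lambda>\<theta>. \<integral>y. f \<theta> y \<partial>M)"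
proof (rule continuous_on_sequentiallyI)
  fix u a assume u: "\<forall>n. u n \<in> T" and a: "a \<in> T" and ua: "u \<longlonglongrightarrow> a"
  show "(\<lambda>n. \<integral>y. f (u n) y \<partial>M) \<longlonglongrightarrow> (\<integral>y. f a y \<partial>M)"
    using u by (intro integral_dominated_convergence[OF meas[OF a] meas w lim[OF u a ua] bound]) auto
qed

lemma integrable_density_times_square_integrable:
  assumes p: "is_density \<nu> p" and g: "g \<in> borel_measurable (density \<nu> (\<lambda>y. ennreal (p y)))"
    and g_sq: "integrable (density \<nu> (\<lambda>y. ennreal (p y))) (\<lambda>y. (g y)\<^sup>2)"
  shows "integrable \<nu> (\<lambda>y. p y * g y)"
proof -
  let ?D = "density \<nu> (\<lambda>y. ennreal (p y))"
  have "emeasure ?D (space ?D) = 1"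
    using p by (simp add: is_density_def emeasure_density cong: nn_integral_cong)
  then interpret D: finite_measure ?D by (intro finite_measureI) simp
  have "integrable ?D g"
    by (rule D.square_integrable_imp_integrable[OF g g_sq])
  then show ?thesis
    using p integrable_density[of g \<nu> p] by (auto simp: is_density_def AE_I2)
qed

lemma continuous_on_KL_integral:
  fixes \<nu> :: "'y measure" and p :: "'y \<Rightarrow> real" and r :: "real \<Rightarrow> 'y \<Rightarrow> real"
  assumes pd: "is_density \<nu> p"
    and rd: "\<forall>\<theta>\<in>{0..1}. is_density \<nu> (r \<theta>)"
    and cont: "AE y in density \<nu> (\<lambda>y. ennreal (p y)). continuous_on {0..1} (\<lambda>\<theta>. r \<theta> y)"
    and dom: "\<exists>g. g \<in> borel_measurable (density \<nu> (\<lambda>y. ennreal (p y))) \<and>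
                   integrable (density \<nu> (\<lambda>y. ennreal (p y))) (\<lambda>y. (g y)\<^sup>2) \<and>
                   (\<forall>\<theta>\<in>{0..1}. AE y in density \<nu> (\<lambda>y. ennreal (p y)).
                      0 < r \<theta> y \<and> \<bar>ln (p y / r \<theta> y)\<bar> \<le> g y)"
  shows "continuous_on {0..1} (\<lambda>\<theta>. \<integral>y. ln (p y / r \<theta> y) * p y \<partial>\<nu>)"
proof -
  let ?D = "density \<nu> (\<lambda>y. ennreal (p y))"
  have [measurable]: "p \<in> borel_measurable \<nu>" and p_nonneg: "AE y in \<nu>. 0 \<le> p y"
    using pd unfolding is_density_def by (auto intro: AE_I2)
  have [measurable]: "\<theta> \<in> {0..1} \<Longrightarrow> r \<theta> \<in> borel_measurable \<nu>" for \<theta>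
    using rd unfolding is_density_def by auto
  obtain g where g_meas: "g \<in> borel_measurable ?D" and g_sq: "integrable ?D (\<lambda>y. (g y)\<^sup>2)"
    and g_bound: "\<forall>\<theta>\<in>{0..1}. AE y in ?D. 0 < r \<theta> y \<and> \<bar>ln (p y / r \<theta> y)\<bar> \<le> g y"
    using dom by blast
  have w: "integrable \<nu> (\<lambda>y. p y * g y)"
    by (rule integrable_density_times_square_integrable[OF pd g_meas g_sq])
  have AE_D: "(AE y in ?D. P y) \<longleftrightarrow> (AE y in \<nu>. 0 < p y \<longrightarrow> P y)" for P
    by (subst AE_density) auto
  have g_bound': "AE y in \<nu>. 0 < p y \<longrightarrow> 0 < r \<theta> y \<and> \<bar>ln (p y / r \<theta> y)\<bar> \<le> g y"
    if "\<theta> \<in> {0..1}" for \<theta>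
    using g_bound that by (intro AE_D[THEN iffD1]) blast
  show ?thesis
  proof (rule continuous_on_integral_dominated[OF _ w])
    show "(\<lambda>y. ln (p y / r \<theta> y) * p y) \<in> borel_measurable \<nu>" if "\<theta> \<in> {0..1}" for \<theta>
      using that by measurable
    show "AE y in \<nu>. norm (ln (p y / r \<theta> y) * p y) \<le> p y * g y" if "\<theta> \<in> {0..1}" for \<theta>
      using g_bound'[OF that] p_nonneg
    proof eventually_elim
      case (elim y)
      then have "\<bar>ln (p y / r \<theta> y)\<bar> * p y \<le> g y * p y"
        by (cases "p y = 0") (auto intro: mult_right_mono)
      then show ?case using elim by (simp add: abs_mult mult.commute)
    qed
    fix u :: "nat \<Rightarrow> real" and a assume u: "\<forall>n. u n \<in> {0..1}" and a: "a \<in> {0..1}" and ua: "u \<longlonglongrightarrow> a"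
    have "AE y in \<nu>. \<forall>n. 0 < p y \<longrightarrow> 0 < r (u n) y"
      unfolding AE_all_countable
    proof
      fix n show "AE y in \<nu>. 0 < p y \<longrightarrow> 0 < r (u n) y"
        using g_bound'[of "u n"] u by (auto elim!: eventually_mono)
    qed
    moreover have "AE y in \<nu>. 0 < p y \<longrightarrow> 0 < r a y"
      using g_bound'[OF a] by eventually_elim auto
    moreover have "AE y in \<nu>. 0 < p y \<longrightarrow> continuous_on {0..1} (\<lambda>\<theta>. r \<theta> y)"
      using cont by (intro AE_D[THEN iffD1])
    moreover note p_nonneg
    ultimately show "AE y in \<nu>. (\<lambda>n. ln (p y / r (u n) y) * p y) \<longlonglongrightarrow> ln (p y / r a y) * p y"
    proof eventually_elim
      case (elim y)
      show ?case
      proof (cases "p y = 0")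
        case False
        with elim have pos: "0 < p y" by simp
        with elim have "(\<lambda>n. r (u n) y) \<longlonglongrightarrow> r a y"
          using u a ua continuous_on_sequentially[of "{0..1}" "\<lambda>\<theta>. r \<theta> y"] by (auto simp: o_def)
        with elim pos show ?thesis
          by (intro tendsto_intros) auto
      qed simp
    qed
  qed
qed

lemma unique_argmin_gap:
  fixes h :: "'a::metric_space \<Rightarrow> real"
  assumes "compact S" "continuous_on S h" "m \<in> S" and min: "\<forall>u\<in>S. h m \<le> h u"
    and uniq: "\<And>s. s \<in> S \<Longrightarrow> \<forall>u\<in>S. h s \<le> h u \<Longrightarrow> s = m" and "0 < e"
  shows "\<exists>\<delta>>0. \<forall>s\<in>S. e \<le> dist s m \<longrightarrow> h m + \<delta> \<le> h s"
proof (cases "S \<inter> {s. e \<le> dist s m} = {}")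
  case True
  then show ?thesis by (intro exI[of _ 1]) auto
next
  case False
  let ?K = "S \<inter> {s. e \<le> dist s m}"
  have "compact ?K"
    using \<open>compact S\<close> by (intro compact_Int_closed closed_Collect_le continuous_intros)
  moreover have "continuous_on ?K h"
    using \<open>continuous_on S h\<close> by (rule continuous_on_subset) blast
  ultimately obtain s0 where s0: "s0 \<in> ?K" "\<forall>s\<in>?K. h s0 \<le> h s"
    using continuous_attains_inf[of ?K h] False by blast
  have "s0 \<noteq> m" using s0(1) \<open>0 < e\<close> by auto
  then obtain u where "u \<in> S" "h u < h s0" using uniq s0(1) by (meson IntD1 not_le)
  then have "h m < h s0" using min by (meson order.strict_trans1)
  then show ?thesis using s0 by (intro exI[of _ "h s0 - h m"]) auto
qed

lemma continuous_on_argmin_mixture: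
  fixes f g :: "'a::metric_space \<Rightarrow> real" and m :: "real \<Rightarrow> 'a"
  assumes S: "compact S" and f: "continuous_on S f" and g: "continuous_on S g"
    and min: "\<And>t. t \<in> {0..1} \<Longrightarrow>
                m t \<in> S \<and> (\<forall>s\<in>S. t * f (m t) + (1-t) * g (m t) \<le> t * f s + (1-t) * g s)"
    and uniq: "\<And>t s. t \<in> {0..1} \<Longrightarrow> s \<in> S \<Longrightarrow>
                \<forall>u\<in>S. t * f s + (1-t) * g s \<le> t * f u + (1-t) * g u \<Longrightarrow> s = m t"
  shows "continuous_on {0..1} m"
proof -
  define h where "h t s = t * f s + (1-t) * g s" for t s
  have "bounded ((\<lambda>s. f s - g s) ` S)"
    using S f g by (intro compact_imp_bounded compact_continuous_image continuous_intros)
  then obtain B0 where "\<forall>s\<in>S. \<bar>f s - g s\<bar> \<le> B0" by (auto simp: bounded_real)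
  then obtain B where B: "0 < B" "\<And>s. s \<in> S \<Longrightarrow> \<bar>f s - g s\<bar> \<le> B"
    by (intro that[of "max B0 1"]) force+
  have h_lipschitz: "\<bar>h t' s - h t s\<bar> \<le> \<bar>t' - t\<bar> * B" if "s \<in> S" for s t t'
  proof -
    have "\<bar>h t' s - h t s\<bar> = \<bar>t' - t\<bar> * \<bar>f s - g s\<bar>"
      by (simp add: h_def abs_mult[symmetric] algebra_simps)
    also have "\<dots> \<le> \<bar>t' - t\<bar> * B" using B that by (intro mult_left_mono) auto
    finally show ?thesis .
  qed
  show ?thesis
    unfolding continuous_on_iff
  proof (intro ballI allI impI)
    fix t e :: real assume t: "t \<in> {0..1}" and "0 < e"
    have "continuous_on S (h t)" unfolding h_def using f g by (intro continuous_intros)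
    then obtain \<delta> where "0 < \<delta>" and gap: "\<forall>s\<in>S. e \<le> dist s (m t) \<longrightarrow> h t (m t) + \<delta> \<le> h t s"
      using unique_argmin_gap[of S "h t" "m t" e] S min[OF t] uniq[OF t] \<open>0 < e\<close>
      unfolding h_def by blast
    show "\<exists>d>0. \<forall>t'\<in>{0..1}. dist t' t < d \<longrightarrow> dist (m t') (m t) < e"
    proof (intro exI[of _ "\<delta> / (2 * B)"] conjI ballI impI)
      fix t' assume t': "t' \<in> {0..1}" and "dist t' t < \<delta> / (2 * B)"
      then have close: "\<bar>t' - t\<bar> * B < \<delta> / 2"
        using B by (simp add: dist_real_def field_simps)
      have "h t' (m t') \<le> h t' (m t)"
        using min[OF t'] min[OF t] unfolding h_def by blast
      moreover have "\<bar>h t' (m t') - h t (m t')\<bar> \<le> \<bar>t' - t\<bar> * B" "\<bar>h t' (m t) - h t (m t)\<bar> \<le> \<bar>t' - t\<bar> * B"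
        using h_lipschitz min[OF t] min[OF t'] by blast+
      ultimately have "h t (m t') < h t (m t) + \<delta>"
        using close unfolding abs_le_iff by linarith
      then show "dist (m t') (m t) < e"
        using gap min[OF t'] by (meson not_le)
    qed (use \<open>0 < \<delta>\<close> B in simp)
  qed
qed

lemma dirac_X_in_Delta_X: "dirac_X x \<in> Delta_X"
  by (simp add: Delta_X_def dirac_X_def)

lemma supp_X_dirac_X [simp]: "supp_X (dirac_X x) = {x}"
  by (auto simp: supp_X_def dirac_X_def)

lemma mixture_in_Delta_X:
  assumes "\<sigma> \<in> Delta_X" "\<tau> \<in> Delta_X" "t \<in> {0..1}"
  shows "(\<lambda>z. t * \<sigma> z + (1 - t) * \<tau> z) \<in> Delta_X"
  using assms by (auto simp: Delta_X_def sum.distrib sum_distrib_left[symmetric])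

lemma supp_X_mixture_subset:
  "supp_X (\<lambda>z. t * \<sigma> z + (1 - t) * \<tau> z) \<subseteq> supp_X \<sigma> \<union> supp_X \<tau>"
  by (auto simp: supp_X_def)

lemma KLD_mixture:
  "KLD \<nu> q q\<theta> s (\<lambda>z. t * \<sigma> z + (1 - t) * \<tau> z) = t * KLD \<nu> q q\<theta> s \<sigma> + (1 - t) * KLD \<nu> q q\<theta> s \<tau>"
  unfolding KLD_def sum_distrib_left sum.distrib[symmetric]
  by (intro sum.cong refl) (simp add: algebra_simps)

lemma dirac_Theta_in_Delta_Theta: "\<theta> \<in> {0..1} \<Longrightarrow> dirac_Theta \<theta> \<in> Delta_Theta"
  unfolding dirac_Theta_def Delta_Theta_def Theta_space_def
  by (auto intro!: prob_space_return simp: space_restrict_space)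

lemma weak_conv_Theta_dirac:
  assumes u: "\<forall>n. u n \<in> {0..1}" and \<theta>: "\<theta> \<in> {0..1}" and lim: "u \<longlonglongrightarrow> \<theta>"
  shows "weak_conv_Theta (\<lambda>n. dirac_Theta (u n)) (dirac_Theta \<theta>)"
  unfolding weak_conv_Theta_def
proof (intro allI impI)
  fix f :: "real \<Rightarrow> real" assume f: "continuous_on {0..1} f"
  have "f \<in> borel_measurable Theta_space"
    unfolding Theta_space_def by (rule borel_measurable_continuous_on_restrict[OF f])
  then have integral_dirac: "(\<integral>s. f s \<partial>dirac_Theta v) = f v" if "v \<in> {0..1}" for v
    unfolding dirac_Theta_def
    by (intro integral_return) (use that in \<open>auto simp: Theta_space_def space_restrict_space\<close>)
  have "(\<lambda>n. f (u n)) \<longlonglongrightarrow> f \<theta>"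
    using f u \<theta> lim continuous_on_sequentially[of "{0..1}" f] by (auto simp: o_def)
  then show "(\<lambda>n. \<integral>s. f s \<partial>dirac_Theta (u n)) \<longlonglongrightarrow> (\<integral>s. f s \<partial>dirac_Theta \<theta>)"
    using integral_dirac u \<theta> by simp
qed

lemma uhc_policy_dirac_eventually:
  assumes "uhc_policy F" "\<theta> \<in> {0..1}"
  shows "eventually (\<lambda>\<theta>'. \<theta>' \<in> {0..1} \<longrightarrow> F (dirac_Theta \<theta>') \<subseteq> F (dirac_Theta \<theta>)) (nhds \<theta>)"
proof -
  have "eventually (\<lambda>\<theta>'. F (dirac_Theta \<theta>') \<subseteq> F (dirac_Theta \<theta>)) (inf (nhds \<theta>) (principal {0..1}))"
  proof (rule sequentially_imp_eventually_nhds_within, intro allI impI, elim conjE)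
    fix u :: "nat \<Rightarrow> real" assume "\<forall>n. u n \<in> {0..1}" "u \<longlonglongrightarrow> \<theta>"
    then have "(\<forall>n. dirac_Theta (u n) \<in> Delta_Theta) \<and>
        weak_conv_Theta (\<lambda>n. dirac_Theta (u n)) (dirac_Theta \<theta>)"
      using assms(2) by (simp add: dirac_Theta_in_Delta_Theta weak_conv_Theta_dirac)
    then show "eventually (\<lambda>n. F (dirac_Theta (u n)) \<subseteq> F (dirac_Theta \<theta>)) sequentially"
      by (rule assms(1)[unfolded uhc_policy_def, rule_format,
            OF dirac_Theta_in_Delta_Theta[OF assms(2)]])
  qed
  then show ?thesis by (simp add: eventually_inf_principal)
qed

lemma open_Collect_ball_shrinking:
  fixes A :: "'a::topological_space \<Rightarrow> 'b set"
  assumes I: "open I"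
    and fin: "\<And>\<theta>. \<theta> \<in> I \<Longrightarrow> finite (A \<theta>)"
    and shrink: "\<And>\<theta>. \<theta> \<in> I \<Longrightarrow> eventually (\<lambda>\<theta>'. A \<theta>' \<subseteq> A \<theta>) (nhds \<theta>)"
    and P: "\<And>x \<theta>. \<theta> \<in> I \<Longrightarrow> P x \<theta> \<Longrightarrow> eventually (P x) (nhds \<theta>)"
  shows "open {\<theta>\<in>I. \<forall>x\<in>A \<theta>. P x \<theta>}"
  unfolding open_subopen[of "{\<theta>\<in>I. \<forall>x\<in>A \<theta>. P x \<theta>}"]
proof (intro ballI)
  fix \<theta> assume \<theta>: "\<theta> \<in> {\<theta>\<in>I. \<forall>x\<in>A \<theta>. P x \<theta>}"
  have "eventually (\<lambda>\<theta>'. \<forall>x\<in>A \<theta>. P x \<theta>') (nhds \<theta>)"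
    using \<theta> P by (intro eventually_ball_finite fin) auto
  moreover have "eventually (\<lambda>\<theta>'. \<theta>' \<in> I) (nhds \<theta>)"
    using I \<theta> by (intro eventually_nhds_in_open) auto
  moreover have "eventually (\<lambda>\<theta>'. A \<theta>' \<subseteq> A \<theta>) (nhds \<theta>)"
    using \<theta> shrink by blast
  ultimately have "eventually (\<lambda>\<theta>'. \<theta>' \<in> {\<theta>\<in>I. \<forall>x\<in>A \<theta>. P x \<theta>}) (nhds \<theta>)"
    by eventually_elim blast
  then show "\<exists>T. open T \<and> \<theta> \<in> T \<and> T \<subseteq> {\<theta>\<in>I. \<forall>x\<in>A \<theta>. P x \<theta>}"
    unfolding eventually_nhds by blast
qed

lemma side_constant_on_connected:
  fixes A :: "real \<Rightarrow> 'b set" and k :: "'b \<Rightarrow> real"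
  assumes I: "connected I" "open I" "I \<noteq> {}"
    and fin: "\<And>\<theta>. \<theta> \<in> I \<Longrightarrow> finite (A \<theta>)"
    and nonempty: "\<And>\<theta>. \<theta> \<in> I \<Longrightarrow> A \<theta> \<noteq> {}"
    and shrink: "\<And>\<theta>. \<theta> \<in> I \<Longrightarrow> eventually (\<lambda>\<theta>'. A \<theta>' \<subseteq> A \<theta>) (nhds \<theta>)"
    and one_side: "\<And>\<theta>. \<theta> \<in> I \<Longrightarrow> (\<forall>x\<in>A \<theta>. \<theta> < k x) \<or> (\<forall>x\<in>A \<theta>. k x < \<theta>)"
  shows "(\<forall>\<theta>\<in>I. \<forall>x\<in>A \<theta>. \<theta> < k x) \<noteq> (\<forall>\<theta>\<in>I. \<forall>x\<in>A \<theta>. k x < \<theta>)"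
proof -
  define Up where "Up = {\<theta>\<in>I. \<forall>x\<in>A \<theta>. \<theta> < k x}"
  define Down where "Down = {\<theta>\<in>I. \<forall>x\<in>A \<theta>. k x < \<theta>}"
  have less_nhds: "eventually (\<lambda>\<theta>'. \<theta>' < c) (nhds \<theta>)" if "\<theta> < c" for \<theta> c :: real
    using eventually_nhds_in_open[of "{..<c}" \<theta>] that by simp
  have greater_nhds: "eventually (\<lambda>\<theta>'. c < \<theta>') (nhds \<theta>)" if "c < \<theta>" for \<theta> c :: real
    using eventually_nhds_in_open[of "{c<..}" \<theta>] that by simp
  have "open Up" unfolding Up_def
    by (rule open_Collect_ball_shrinking) (auto intro: I(2) fin shrink less_nhds)
  moreover have "open Down" unfolding Down_def
    by (rule open_Collect_ball_shrinking) (auto intro: I(2) fin shrink greater_nhds)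
  moreover have disjoint: "Up \<inter> Down = {}"
  proof (rule equals0I)
    fix \<theta> assume \<theta>: "\<theta> \<in> Up \<inter> Down"
    then obtain x where "x \<in> A \<theta>" using nonempty by (auto simp: Up_def)
    with \<theta> have "\<theta> < k x" "k x < \<theta>" by (auto simp: Up_def Down_def)
    then show False by simp
  qed
  moreover have cover: "I \<subseteq> Up \<union> Down" "Up \<subseteq> I" "Down \<subseteq> I"
    using one_side by (auto simp: Up_def Down_def)
  ultimately have "Up \<inter> I = {} \<or> Down \<inter> I = {}"
    by (intro connectedD[OF I(1)]) auto
  then have "(Up = I) \<noteq> (Down = I)"
    using cover disjoint I(3) by auto
  moreover have "(\<forall>\<theta>\<in>I. \<forall>x\<in>A \<theta>. \<theta> < k x) \<longleftrightarrow> Up = I"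
    "(\<forall>\<theta>\<in>I. \<forall>x\<in>A \<theta>. k x < \<theta>) \<longleftrightarrow> Down = I"
    by (auto simp: Up_def Down_def)
  ultimately show ?thesis by simp
qed

lemma sorted_list_of_set_consecutive:
  fixes S :: "'a::linorder set"
  assumes "finite S" "n + 1 < length (sorted_list_of_set S)"
  defines "ts \<equiv> sorted_list_of_set S"
  shows "ts ! n < ts ! (n + 1)" "ts ! n \<in> S" "ts ! (n + 1) \<in> S"
    and "{ts ! n <..< ts ! (n + 1)} \<inter> S = {}"
proof -
  have set_ts: "set ts = S" and sorted: "sorted_wrt (<) ts" and len: "n + 1 < length ts"
    using assms by (simp_all add: ts_def)
  have mono: "ts ! i \<le> ts ! j" if "i \<le> j" "j < length ts" for i j
    using that sorted_nth_mono[of ts] sorted_wrt_mono_rel[OF _ sorted, of "(\<le>)"] by auto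
  show "ts ! n < ts ! (n + 1)" using sorted len by (simp add: sorted_wrt_nth_less)
  show "ts ! n \<in> S" "ts ! (n + 1) \<in> S" using set_ts len nth_mem by auto
  show "{ts ! n <..< ts ! (n + 1)} \<inter> S = {}"
  proof (rule ccontr)
    assume "{ts ! n <..< ts ! (n + 1)} \<inter> S \<noteq> {}"
    then obtain k where k: "k < length ts" "ts ! n < ts ! k" "ts ! k < ts ! (n + 1)"
      using set_ts by (auto simp: in_set_conv_nth)
    have "\<not> k \<le> n" using mono[of k n] k len by auto
    moreover have "\<not> n + 1 \<le> k" using mono[of "n + 1" k] k by auto
    ultimately show False by simp
  qed
qed

locale misspecified_learning =
  fixes \<nu> :: "'y measure" and q :: "'x::finite \<Rightarrow> 'y \<Rightarrow> real"
    and q\<theta> :: "real \<Rightarrow> 'x \<Rightarrow> 'y \<Rightarrow> real" and F :: "real measure \<Rightarrow> 'x set"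
  assumes density_q: "\<forall>x. is_density \<nu> (q x)"
    and density_q\<theta>: "\<forall>\<theta>\<in>{0..1}. \<forall>x. is_density \<nu> (q\<theta> \<theta> x)"
    and continuous_q\<theta>: "\<forall>x. AE y in Qdist \<nu> q x. continuous_on {0..1} (\<lambda>\<theta>. q\<theta> \<theta> x y)"
    and dominated: "\<forall>x. \<exists>g. g \<in> borel_measurable (Qdist \<nu> q x) \<and>
                   integrable (Qdist \<nu> q x) (\<lambda>y. (g y)\<^sup>2) \<and>
                   (\<forall>\<theta>\<in>{0..1}. AE y in Qdist \<nu> q x.
                      0 < q\<theta> \<theta> x y \<and> \<bar>ln (q x y / q\<theta> \<theta> x y)\<bar> \<le> g y)"
    and policy_nonempty: "\<forall>\<mu>\<in>Delta_Theta. F \<mu> \<noteq> {}"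
    and policy_uhc: "uhc_policy F"
    and unique_minimizer: "\<forall>\<sigma>\<in>Delta_X. \<exists>!\<theta>. \<theta> \<in> {0..1} \<and>
                      (\<forall>t\<in>{0..1}. KLD \<nu> q q\<theta> \<theta> \<sigma> \<le> KLD \<nu> q q\<theta> t \<sigma>)"
begin

abbreviation K :: "real \<Rightarrow> ('x \<Rightarrow> real) \<Rightarrow> real" where
  "K \<equiv> KLD \<nu> q q\<theta>"

abbreviation best_fit :: "('x \<Rightarrow> real) \<Rightarrow> real" where
  "best_fit \<equiv> KL_min \<nu> q q\<theta>"

abbreviation eq_models :: "real set" where
  "eq_models \<equiv> equilibrium_models \<nu> q q\<theta> F"

lemma best_fit_minimizes:
  assumes "\<sigma> \<in> Delta_X"
  shows "best_fit \<sigma> \<in> {0..1}" "\<forall>t\<in>{0..1}. K (best_fit \<sigma>) \<sigma> \<le> K t \<sigma>"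
  using theI'[OF unique_minimizer[rule_format, OF assms]] unfolding KL_min_def by blast+

lemma best_fit_unique:
  assumes "\<sigma> \<in> Delta_X" "s \<in> {0..1}" "\<forall>t\<in>{0..1}. K s \<sigma> \<le> K t \<sigma>"
  shows "s = best_fit \<sigma>"
  using assms best_fit_minimizes[OF assms(1)] unique_minimizer by blast

lemma continuous_on_K: "continuous_on {0..1} (\<lambda>s. K s \<sigma>)"
proof -
  have "continuous_on {0..1} (\<lambda>s. \<integral>y. ln (q x y / q\<theta> s x y) * q x y \<partial>\<nu>)" for x
    using density_q density_q\<theta> continuous_q\<theta>[unfolded Qdist_def] dominated[unfolded Qdist_def]
    by (intro continuous_on_KL_integral[where r="\<lambda>\<theta>. q\<theta> \<theta> x"]) auto
  then show ?thesis unfolding KLD_def by (intro continuous_intros)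
qed

lemma continuous_on_best_fit_mixture:
  assumes "\<sigma> \<in> Delta_X" "\<tau> \<in> Delta_X"
  shows "continuous_on {0..1} (\<lambda>t. best_fit (\<lambda>z. t * \<sigma> z + (1 - t) * \<tau> z))"
proof (rule continuous_on_argmin_mixture[OF compact_Icc continuous_on_K continuous_on_K])
  fix t :: real assume "t \<in> {0..1}"
  define \<rho> where "\<rho> = (\<lambda>z. t * \<sigma> z + (1 - t) * \<tau> z)"
  have \<rho>: "\<rho> \<in> Delta_X" and K_\<rho>: "\<And>s. K s \<rho> = t * K s \<sigma> + (1 - t) * K s \<tau>"
    using mixture_in_Delta_X[OF assms \<open>t \<in> {0..1}\<close>] by (simp_all add: \<rho>_def KLD_mixture)
  show "best_fit \<rho> \<in> {0..1} \<and> (\<forall>s\<in>{0..1}.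
      t * K (best_fit \<rho>) \<sigma> + (1 - t) * K (best_fit \<rho>) \<tau> \<le> t * K s \<sigma> + (1 - t) * K s \<tau>)"
    using best_fit_minimizes[OF \<rho>] unfolding K_\<rho> by blast
  show "s = best_fit \<rho>" if "s \<in> {0..1}"
    and "\<forall>u\<in>{0..1}. t * K s \<sigma> + (1 - t) * K s \<tau> \<le> t * K u \<sigma> + (1 - t) * K u \<tau>" for s
    using best_fit_unique[OF \<rho>] that unfolding K_\<rho> by blast
qed

lemma equilibrium_modelI:
  "\<sigma> \<in> Delta_X \<Longrightarrow> supp_X \<sigma> \<subseteq> F (dirac_Theta (best_fit \<sigma>)) \<Longrightarrow> best_fit \<sigma> \<in> eq_models"
  unfolding equilibrium_models_def is_equilibrium_def by blast

lemma eq_models_subset: "eq_models \<subseteq> {0..1}"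
  using best_fit_minimizes unfolding equilibrium_models_def is_equilibrium_def by blast

lemma best_fit_dirac_neq:
  assumes "\<theta> \<notin> eq_models" "x \<in> F (dirac_Theta \<theta>)"
  shows "best_fit (dirac_X x) \<noteq> \<theta>"
  using assms equilibrium_modelI[OF dirac_X_in_Delta_X, of x] by auto

lemma best_fit_dirac_not_straddle:
  assumes \<theta>: "\<theta> \<notin> eq_models" and x: "x \<in> F (dirac_Theta \<theta>)" "x' \<in> F (dirac_Theta \<theta>)"
    and below: "best_fit (dirac_X x') < \<theta>" and above: "\<theta> < best_fit (dirac_X x)"
  shows False
proof -
  define \<sigma> where "\<sigma> t = (\<lambda>z. t * dirac_X x z + (1 - t) * dirac_X x' z)" for t
  have "\<sigma> 0 = dirac_X x'" "\<sigma> 1 = dirac_X x" by (auto simp: \<sigma>_def)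
  moreover have "continuous_on {0..1} (\<lambda>t. best_fit (\<sigma> t))"
    unfolding \<sigma>_def by (intro continuous_on_best_fit_mixture dirac_X_in_Delta_X)
  ultimately obtain t where t: "t \<in> {0..1}" "best_fit (\<sigma> t) = \<theta>"
    using IVT'[of "\<lambda>t. best_fit (\<sigma> t)" 0 \<theta> 1] below above by auto
  have "supp_X (\<sigma> t) \<subseteq> F (dirac_Theta \<theta>)"
    using supp_X_mixture_subset x unfolding \<sigma>_def by fastforce
  then have "\<theta> \<in> eq_models"
    using equilibrium_modelI[of "\<sigma> t"] mixture_in_Delta_X[OF dirac_X_in_Delta_X dirac_X_in_Delta_X t(1)] t(2)
    unfolding \<sigma>_def by auto
  with \<theta> show False ..
qed

lemma best_responses_one_side:
  assumes "\<theta> \<notin> eq_models"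
  shows "(\<forall>x\<in>F (dirac_Theta \<theta>). \<theta> < best_fit (dirac_X x)) \<or>
         (\<forall>x\<in>F (dirac_Theta \<theta>). best_fit (dirac_X x) < \<theta>)"
  using best_fit_dirac_neq[OF assms] best_fit_dirac_not_straddle[OF assms]
  by (meson linorder_neqE_linordered_idom)

lemma side_constant_between_eq_models:
  assumes "a < b" "{a<..<b} \<subseteq> {0..1}" "{a<..<b} \<inter> eq_models = {}"
  shows "(\<forall>\<theta>\<in>{a<..<b}. \<forall>x\<in>F (dirac_Theta \<theta>). \<theta> < best_fit (dirac_X x)) \<noteq>
         (\<forall>\<theta>\<in>{a<..<b}. \<forall>x\<in>F (dirac_Theta \<theta>). best_fit (dirac_X x) < \<theta>)"
proof (rule side_constant_on_connected)
  fix \<theta> assume \<theta>: "\<theta> \<in> {a<..<b}"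
  then have "\<theta> \<in> {0..1}" "\<theta> \<notin> eq_models" using assms by auto
  then show "F (dirac_Theta \<theta>) \<noteq> {}"
    and "(\<forall>x\<in>F (dirac_Theta \<theta>). \<theta> < best_fit (dirac_X x)) \<or>
         (\<forall>x\<in>F (dirac_Theta \<theta>). best_fit (dirac_X x) < \<theta>)"
    using policy_nonempty dirac_Theta_in_Delta_Theta best_responses_one_side by blast+
  have "eventually (\<lambda>\<theta>'. \<theta>' \<in> {a<..<b}) (nhds \<theta>)"
    using \<theta> by (intro eventually_nhds_in_open) auto
  with uhc_policy_dirac_eventually[OF policy_uhc \<open>\<theta> \<in> {0..1}\<close>]
  show "eventually (\<lambda>\<theta>'. F (dirac_Theta \<theta>') \<subseteq> F (dirac_Theta \<theta>)) (nhds \<theta>)"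
    by eventually_elim (use assms(2) in blast)
qed (use assms(1) in auto)

end

theorem mainTheorem11:
  fixes Y :: "'y::euclidean_space set"
    and \<nu> :: "'y measure"
    and q :: "'x::finite \<Rightarrow> 'y \<Rightarrow> real"
    and q\<theta> :: "real \<Rightarrow> 'x \<Rightarrow> 'y \<Rightarrow> real"
    and prior :: "real measure"
    and F :: "real measure \<Rightarrow> 'x set"
  assumes A1_Y: "compact Y"
    and A1_nu: "prob_space \<nu>" "sets \<nu> = sets (restrict_space borel Y)"
    and A1_q: "\<forall>x. is_density \<nu> (q x)"
    and A1_q\<theta>: "\<forall>\<theta>\<in>{0..1}. \<forall>x. is_density \<nu> (q\<theta> \<theta> x)"
    and A2_cont: "\<forall>x. AE y in Qdist \<nu> q x. continuous_on {0..1} (\<lambda>\<theta>. q\<theta> \<theta> x y)"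
    and A2_dom: "\<forall>x. \<exists>g. g \<in> borel_measurable (Qdist \<nu> q x) \<and>
                   integrable (Qdist \<nu> q x) (\<lambda>y. (g y)\<^sup>2) \<and>
                   (\<forall>\<theta>\<in>{0..1}. AE y in Qdist \<nu> q x.
                      0 < q\<theta> \<theta> x y \<and> \<bar>ln (q x y / q\<theta> \<theta> x y)\<bar> \<le> g y)"
    and A3: "prior \<in> Delta_Theta"
      "\<forall>U. open U \<and> U \<inter> {0..1} \<noteq> {} \<longrightarrow> 0 < measure prior (U \<inter> {0..1})"
    and A4: "\<forall>\<mu>\<in>Delta_Theta. F \<mu> \<noteq> {}" "uhc_policy F"
    and A5_unique: "\<forall>\<sigma>\<in>Delta_X. \<exists>!\<theta>. \<theta> \<in> {0..1} \<and>
                      (\<forall>t\<in>{0..1}. KLD \<nu> q q\<theta> \<theta> \<sigma> \<le> KLD \<nu> q q\<theta> t \<sigma>)"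
    and A5_curv: "\<forall>\<sigma>\<in>Delta_X. KL_min \<nu> q q\<theta> \<sigma> \<in> {0<..<1} \<longrightarrow>
                    (\<exists>K' d. 0 < d \<and>
                       (\<exists>e>0. \<forall>t. \<bar>t - KL_min \<nu> q q\<theta> \<sigma>\<bar> < e \<longrightarrow>
                          ((\<lambda>s. KLD \<nu> q q\<theta> s \<sigma>) has_real_derivative K' t) (at t)) \<and>
                       (K' has_real_derivative d) (at (KL_min \<nu> q q\<theta> \<sigma>)))"
    and fin: "finite (equilibrium_models \<nu> q q\<theta> F)"
  shows "let ts = sorted_list_of_set (equilibrium_models \<nu> q q\<theta> F \<union> {0, 1}) in
           \<forall>n < length ts - 1.
             (\<forall>\<theta>\<in>{ts ! n <..< ts ! (n+1)}. \<forall>x\<in>F (dirac_Theta \<theta>).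
                 KL_min \<nu> q q\<theta> (dirac_X x) > \<theta>)
             \<noteq>
             (\<forall>\<theta>\<in>{ts ! n <..< ts ! (n+1)}. \<forall>x\<in>F (dirac_Theta \<theta>).
                 KL_min \<nu> q q\<theta> (dirac_X x) < \<theta>)"
proof -
  interpret misspecified_learning \<nu> q q\<theta> F
    using A1_q A1_q\<theta> A2_cont A2_dom A4 A5_unique by unfold_locales
  show ?thesis
    unfolding Let_def
  proof (intro allI impI)
    fix n
    let ?S = "equilibrium_models \<nu> q q\<theta> F \<union> {0, 1}"
    let ?ts = "sorted_list_of_set ?S"
    assume "n < length ?ts - 1"
    then have "n + 1 < length ?ts" by linarith
    then have gap: "?ts ! n < ?ts ! (n + 1)" "?ts ! n \<in> ?S" "?ts ! (n + 1) \<in> ?S"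
        "{?ts ! n <..< ?ts ! (n + 1)} \<inter> ?S = {}"
      using sorted_list_of_set_consecutive[of ?S] fin by auto
    moreover have "{?ts ! n <..< ?ts ! (n + 1)} \<subseteq> {0..1}"
      using gap(2,3) eq_models_subset by fastforce
    ultimately show "(\<forall>\<theta>\<in>{?ts ! n <..< ?ts ! (n + 1)}. \<forall>x\<in>F (dirac_Theta \<theta>).
          KL_min \<nu> q q\<theta> (dirac_X x) > \<theta>) \<noteq>
        (\<forall>\<theta>\<in>{?ts ! n <..< ?ts ! (n + 1)}. \<forall>x\<in>F (dirac_Theta \<theta>).
          KL_min \<nu> q q\<theta> (dirac_X x) < \<theta>)"
      by (intro side_constant_between_eq_models) auto
  qed
qed

end
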